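(* Let $P=(Q,I,M,\Delta)$ be a broadcast protocol and consider a run of the saturation algorithm on $P$, with $S_0=I,S_1,\dots,S_m$ the values of $S$ after each iteration and $c_0=|I|,c_1,\dots,c_m$ the corresponding values of $c$. For every $0\le i\le m$ there exist a configuration $\gamma=(V,E,L)$ and a lossy execution $\rho$ from an initial configuration to $\gamma$ such that: $\rho$ has exactly $c_i$ nodes; every node performs at most $i$ broadcasts (lost or successful) and at most $1$ successful broadcast along $\rho$; and there is a family of pairwise distinct nodes $(v^{main}_q)_{q\in S_i}$ (the main nodes) such that for every $q\in S_i$, $L(v^{main}_q)=q$, $v^{main}_q$ performs no successful broadcast along $\rho$, and every neighbour of $v^{main}_q$ in $E$ is not a main node. (Nodes that are not main nodes are considered irrelevant and their labels are unconstrained.)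
   Context: A broadcast protocol is a tuple $P=(Q,I,M,\Delta)$ where $Q$ is a finite set of states, $I\subseteq Q$ initial states, $M$ a finite message alphabet and $\Delta\subseteq Q\times\{!!m,\ ??m \mid m\in M\}\times Q$ ($!!m$ = broadcast, $??m$ = reception). Protocols are complete for receptions: for every $q$, $m$ there is $q'$ with $(q,??m,q')\in\Delta$. A configuration is a finite undirected graph $\gamma=(V,E,L)$, $E$ symmetric irreflexive, $L:V\to Q$; $\gamma$ is initial if $L(V)\subseteq I$. A lossy step goes from $\gamma=(V,E,L)$ to $\gamma'=(V,E,L')$ (same nodes and edges) if there exist a node $v$ (which broadcasts) and $m\in M$ with $(L(v),!!m,L'(v))\in\Delta$ and either (a) $L'(v')=L(v')$ for all $v'\neq v$ (lost broadcast), or (b) for every $v'\neq v$: if $v'$ is a neighbour of $v$ then $(L(v'),??m,L'(v'))\in\Delta$, otherwise $L'(v')=L(v')$ (successful broadcast). A lossy execution is a sequence of configurations starting from an initial one with consecutive lossy steps; its number of nodes is $|V|$. The saturation algorithm: start with $S:=I$, $c:=|I|$; repeat: if there is $(q_1,!!m,q_2)\in\Delta$ with $q_1\in S$, $q_2\notin S$, add $q_2$ to $S$ and $c:=c+1$; else if there are $(q_1,!!m,q_2),(q_1',??m,q_2')\in\Delta$ with $q_1,q_2,q_1'\in S$, $q_2'\notin S$, add $q_2'$ and $c:=c+2$; else stop and return $S$. *)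

theory Defs
  imports Main
begin

datatype 'm action = Bcast 'm | Recv 'm

definition msg_of :: "'m action \<Rightarrow> 'm" where
  "msg_of a = (case a of Bcast m \<Rightarrow> m | Recv m \<Rightarrow> m)"

definition broadcast_protocol ::
  "'q set \<Rightarrow> 'q set \<Rightarrow> 'm set \<Rightarrow> ('q \<times> 'm action \<times> 'q) set \<Rightarrow> bool" where
  "broadcast_protocol Q I M Delta \<longleftrightarrow>
     finite Q \<and> I \<subseteq> Q \<and> finite M \<and>
     (\<forall>(q, a, q') \<in> Delta. q \<in> Q \<and> q' \<in> Q \<and> msg_of a \<in> M) \<and>
     (\<forall>q \<in> Q. \<forall>m \<in> M. \<exists>q'. (q, Recv m, q') \<in> Delta)"

definition graph :: "'v set \<Rightarrow> ('v \<times> 'v) set \<Rightarrow> bool" where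
  "graph V E \<longleftrightarrow> finite V \<and> E \<subseteq> V \<times> V \<and> sym E \<and> irrefl E"

text \<open>Labels of nodes outside V are kept unchanged (they are irrelevant).\<close>
definition lossy_step ::
  "('q \<times> 'm action \<times> 'q) set \<Rightarrow> 'v set \<Rightarrow> ('v \<times> 'v) set \<Rightarrow>
   ('v \<Rightarrow> 'q) \<Rightarrow> 'v \<Rightarrow> 'm \<Rightarrow> bool \<Rightarrow> ('v \<Rightarrow> 'q) \<Rightarrow> bool" where
  "lossy_step Delta V E L v m b L' \<longleftrightarrow>
     v \<in> V \<and> (L v, Bcast m, L' v) \<in> Delta \<and>
     (if b then (\<forall>v'. v' \<noteq> v \<longrightarrow>
                   (if (v, v') \<in> E then (L v', Recv m, L' v') \<in> Delta else L' v' = L v'))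
      else (\<forall>v'. v' \<noteq> v \<longrightarrow> L' v' = L v'))"

text \<open>An execution is a list of steps (broadcaster, message, successful?, new labelling).\<close>
type_synonym ('v, 'm, 'q) step = "'v \<times> 'm \<times> bool \<times> ('v \<Rightarrow> 'q)"

fun lossy_run ::
  "('q \<times> 'm action \<times> 'q) set \<Rightarrow> 'v set \<Rightarrow> ('v \<times> 'v) set \<Rightarrow>
   ('v \<Rightarrow> 'q) \<Rightarrow> ('v, 'm, 'q) step list \<Rightarrow> ('v \<Rightarrow> 'q) \<Rightarrow> bool" where
  "lossy_run Delta V E L [] L' \<longleftrightarrow> L' = L"
| "lossy_run Delta V E L ((v, m, b, L1) # rest) L' \<longleftrightarrow>
     lossy_step Delta V E L v m b L1 \<and> lossy_run Delta V E L1 rest L'"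

definition lossy_execution ::
  "'q set \<Rightarrow> ('q \<times> 'm action \<times> 'q) set \<Rightarrow> 'v set \<Rightarrow> ('v \<times> 'v) set \<Rightarrow>
   ('v \<Rightarrow> 'q) \<Rightarrow> ('v, 'm, 'q) step list \<Rightarrow> ('v \<Rightarrow> 'q) \<Rightarrow> bool" where
  "lossy_execution I Delta V E L0 steps L \<longleftrightarrow>
     graph V E \<and> L0 ` V \<subseteq> I \<and> lossy_run Delta V E L0 steps L"

definition num_broadcasts :: "('v, 'm, 'q) step list \<Rightarrow> 'v \<Rightarrow> nat" where
  "num_broadcasts steps v = length (filter (\<lambda>s. fst s = v) steps)"

definition num_successful :: "('v, 'm, 'q) step list \<Rightarrow> 'v \<Rightarrow> nat" where
  "num_successful steps v = length (filter (\<lambda>s. fst s = v \<and> fst (snd (snd s))) steps)"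

definition rule1_applicable :: "('q \<times> 'm action \<times> 'q) set \<Rightarrow> 'q set \<Rightarrow> bool" where
  "rule1_applicable Delta S \<longleftrightarrow> (\<exists>q1 m q2. (q1, Bcast m, q2) \<in> Delta \<and> q1 \<in> S \<and> q2 \<notin> S)"

definition rule2_applicable :: "('q \<times> 'm action \<times> 'q) set \<Rightarrow> 'q set \<Rightarrow> bool" where
  "rule2_applicable Delta S \<longleftrightarrow> (\<exists>q1 m q2 q1' q2'. (q1, Bcast m, q2) \<in> Delta \<and>
      (q1', Recv m, q2') \<in> Delta \<and> q1 \<in> S \<and> q2 \<in> S \<and> q1' \<in> S \<and> q2' \<notin> S)"

definition sat_step ::
  "('q \<times> 'm action \<times> 'q) set \<Rightarrow> 'q set \<Rightarrow> nat \<Rightarrow> 'q set \<Rightarrow> nat \<Rightarrow> bool" where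
  "sat_step Delta S c S' c' \<longleftrightarrow>
     (\<exists>q1 m q2. (q1, Bcast m, q2) \<in> Delta \<and> q1 \<in> S \<and> q2 \<notin> S \<and>
                S' = insert q2 S \<and> c' = c + 1)
   \<or> (\<not> rule1_applicable Delta S \<and>
      (\<exists>q1 m q2 q1' q2'. (q1, Bcast m, q2) \<in> Delta \<and> (q1', Recv m, q2') \<in> Delta \<and>
          q1 \<in> S \<and> q2 \<in> S \<and> q1' \<in> S \<and> q2' \<notin> S \<and>
          S' = insert q2' S \<and> c' = c + 2))"

definition saturation_run ::
  "'q set \<Rightarrow> ('q \<times> 'm action \<times> 'q) set \<Rightarrow> (nat \<Rightarrow> 'q set) \<Rightarrow> (nat \<Rightarrow> nat) \<Rightarrow> nat \<Rightarrow> bool" where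
  "saturation_run I Delta S c m \<longleftrightarrow>
     S 0 = I \<and> c 0 = card I \<and>
     (\<forall>i < m. sat_step Delta (S i) (c i) (S (Suc i)) (c (Suc i))) \<and>
     \<not> rule1_applicable Delta (S m) \<and> \<not> rule2_applicable Delta (S m)"

end

(*
  Induction along the saturation run, maintaining a lossy execution in which the states of S_i are
  carried by pairwise non-adjacent main nodes that never broadcast successfully.

  The basic tool is cloning a main node u: a fresh node w gets the neighbours of u and repeats
  every broadcast of u right after it. Since all broadcasts of u are lost, nobody hears the copies,
  and w hears exactly what u hears, so w ends in the state of u.

  Rule 1 clones the main node of q1 and lets the clone move to q2 by a lost broadcast.
  Rule 2 clones the main nodes of q1 and q1', joins the two clones w and r by an edge and lets w
  broadcast successfully, which moves r to q2'; r becomes the main node of q2'. The other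
  neighbours of w are copies of neighbours of a main node, hence not main nodes, so their reactions
  are harmless. Each rule adds at most one broadcast per node, and the only successful one is by w,
  which is not a main node.
*)
theory Submission
  imports Defs
begin

lemma num_broadcasts_Nil [simp]: "num_broadcasts [] x = 0"
  by (simp add: num_broadcasts_def)

lemma num_broadcasts_Cons [simp]:
  "num_broadcasts ((v, m, b, L) # steps) x = (if v = x then 1 else 0) + num_broadcasts steps x"
  by (simp add: num_broadcasts_def)

lemma num_broadcasts_append [simp]:
  "num_broadcasts (xs @ ys) x = num_broadcasts xs x + num_broadcasts ys x"
  by (simp add: num_broadcasts_def)

lemma num_successful_Nil [simp]: "num_successful [] x = 0"
  by (simp add: num_successful_def)

lemma num_successful_Cons [simp]:
  "num_successful ((v, m, b, L) # steps) x = (if v = x \<and> b then 1 else 0) + num_successful steps x"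
  by (simp add: num_successful_def)

lemma num_successful_append [simp]:
  "num_successful (xs @ ys) x = num_successful xs x + num_successful ys x"
  by (simp add: num_successful_def)

lemma lossy_run_append:
  "lossy_run Delta V E L (xs @ ys) L'' \<longleftrightarrow>
     (\<exists>L'. lossy_run Delta V E L xs L' \<and> lossy_run Delta V E L' ys L'')"
  by (induction xs arbitrary: L) auto

lemma lossy_run_broadcasters_in_nodes:
  "lossy_run Delta V E L steps L' \<Longrightarrow> fst ` set steps \<subseteq> V"
  by (induction Delta V E L steps L' rule: lossy_run.induct) (auto simp: lossy_step_def)

lemma lossy_step_label_reached:
  "lossy_step Delta V E L v m b L' \<Longrightarrow> L' x = L x \<or> (\<exists>q a. (q, a, L' x) \<in> Delta)"
  unfolding lossy_step_def by (cases "x = v") (auto split: if_splits)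

lemma lossy_run_labels_in_states:
  assumes "lossy_run Delta V E L steps L'" and "\<forall>(q, a, q') \<in> Delta. q' \<in> Q" and "L ` V \<subseteq> Q"
  shows "L' ` V \<subseteq> Q"
  using assms
proof (induction Delta V E L steps L' rule: lossy_run.induct)
  case (2 Delta V E L v m b L1 rest L')
  have "L1 x \<in> Q" if "x \<in> V" for x
    using lossy_step_label_reached[of Delta V E L v m b L1 x] "2.prems" that by auto
  with "2.IH" "2.prems" show ?case by auto
qed simp

lemma lossy_execution_labels_in_states:
  assumes "broadcast_protocol Q I M Delta" and "lossy_execution I Delta V E L0 steps L"
  shows "L ` V \<subseteq> Q"
proof (rule lossy_run_labels_in_states)
  show "lossy_run Delta V E L0 steps L" and "L0 ` V \<subseteq> Q"
    using assms by (auto simp: broadcast_protocol_def lossy_execution_def)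
  show "\<forall>(q, a, q') \<in> Delta. q' \<in> Q"
    using assms(1) by (auto simp: broadcast_protocol_def)
qed

lemma lossy_run_change_edges:
  assumes "lossy_run Delta V E L steps L'"
    and "\<And>v v'. num_successful steps v \<noteq> 0 \<Longrightarrow> (v, v') \<in> E' \<longleftrightarrow> (v, v') \<in> E"
  shows "lossy_run Delta V E' L steps L'"
  using assms
proof (induction Delta V E L steps L' rule: lossy_run.induct)
  case (2 Delta V E L v m b L1 rest L')
  have "b \<Longrightarrow> (v, v') \<in> E' \<longleftrightarrow> (v, v') \<in> E" for v'
    using "2.prems"(2)[of v v'] by simp
  then have "lossy_step Delta V E' L v m b L1"
    using "2.prems"(1) by (cases b) (simp_all add: lossy_step_def)
  moreover have "lossy_run Delta V E' L1 rest L'"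
    using "2.IH" "2.prems" by (simp split: if_splits)
  ultimately show ?case by simp
qed simp

lemma lossy_execution_snoc:
  assumes "lossy_execution I Delta V E L0 steps L" and "lossy_step Delta V E L v m b L'"
  shows "lossy_execution I Delta V E L0 (steps @ [(v, m, b, L')]) L'"
  using assms by (auto simp: lossy_execution_def lossy_run_append)

lemma lossy_execution_add_edge:
  assumes "lossy_execution I Delta V E L0 steps L"
    and "u \<in> V" "w \<in> V" "u \<noteq> w"
    and "num_successful steps u = 0" "num_successful steps w = 0"
  shows "lossy_execution I Delta V (E \<union> {(u, w), (w, u)}) L0 steps L"
proof -
  have run: "lossy_run Delta V E L0 steps L" and "graph V E" and "L0 ` V \<subseteq> I"
    using assms(1) by (simp_all add: lossy_execution_def)
  have "lossy_run Delta V (E \<union> {(u, w), (w, u)}) L0 steps L"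
    using run by (rule lossy_run_change_edges) (use assms(5,6) in auto)
  moreover have "graph V (E \<union> {(u, w), (w, u)})"
    using \<open>graph V E\<close> assms(2-4) unfolding graph_def sym_def irrefl_def by blast
  ultimately show ?thesis
    using \<open>L0 ` V \<subseteq> I\<close> by (simp add: lossy_execution_def)
qed

definition clone_edges :: "('v \<times> 'v) set \<Rightarrow> 'v \<Rightarrow> 'v \<Rightarrow> ('v \<times> 'v) set" where
  "clone_edges E u w = E \<union> {(w, x) | x. (u, x) \<in> E} \<union> {(x, w) | x. (u, x) \<in> E}"

lemma in_clone_edges_iff [simp]:
  "(x, y) \<in> clone_edges E u w \<longleftrightarrow> (x, y) \<in> E \<or> x = w \<and> (u, y) \<in> E \<or> y = w \<and> (u, x) \<in> E"
  by (auto simp: clone_edges_def)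

lemma graph_clone_edges:
  assumes "graph V E" and "u \<in> V" and "w \<notin> V"
  shows "graph (insert w V) (clone_edges E u w)"
  using assms unfolding graph_def sym_def irrefl_def by auto

text \<open>The labelling argument is the labelling before the first step; it keeps w in the previous
  state of u while u moves.\<close>
fun clone_steps :: "'v \<Rightarrow> 'v \<Rightarrow> ('v \<Rightarrow> 'q) \<Rightarrow> ('v, 'm, 'q) step list \<Rightarrow> ('v, 'm, 'q) step list" where
  "clone_steps u w L [] = []"
| "clone_steps u w L ((v, m, b, L1) # rest) =
     (if v = u then [(u, m, b, L1(w := L u)), (w, m, b, L1(w := L1 u))]
      else [(v, m, b, L1(w := L1 u))]) @ clone_steps u w L1 rest"

lemma num_broadcasts_clone_steps:
  "w \<notin> fst ` set steps \<Longrightarrow> u \<noteq> w \<Longrightarrow>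
    num_broadcasts (clone_steps u w L steps) x = num_broadcasts steps (if x = w then u else x)"
  by (induction u w L steps rule: clone_steps.induct) auto

lemma num_successful_clone_steps:
  "w \<notin> fst ` set steps \<Longrightarrow> u \<noteq> w \<Longrightarrow>
    num_successful (clone_steps u w L steps) x = num_successful steps (if x = w then u else x)"
  by (induction u w L steps rule: clone_steps.induct) auto

lemma lossy_step_clone_edges:
  assumes step: "lossy_step Delta V E L v m b L1" and "graph V E" and "v \<noteq> u" and "w \<notin> V"
  shows "lossy_step Delta (insert w V) (clone_edges E u w) (L(w := L u)) v m b (L1(w := L1 u))"
proof -
  have "v \<in> V" and "E \<subseteq> V \<times> V" and "sym E"
    using assms by (auto simp: lossy_step_def graph_def)
  have u_hears: "(L u, Recv m, L1 u) \<in> Delta" if "b" and "(u, v) \<in> E"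
    using step that \<open>sym E\<close> \<open>v \<noteq> u\<close> by (auto simp: lossy_step_def dest: symD)
  have u_unchanged: "L1 u = L u" if "\<not> b \<or> (u, v) \<notin> E"
    using step that \<open>sym E\<close> \<open>v \<noteq> u\<close> by (auto simp: lossy_step_def dest: symD split: if_splits)
  show ?thesis
    using step u_hears u_unchanged \<open>v \<in> V\<close> \<open>E \<subseteq> V \<times> V\<close> assms(4)
    unfolding lossy_step_def by auto
qed

lemma lossy_run_clone:
  assumes "lossy_run Delta V E L steps L'" and "graph V E" and "u \<in> V" and "w \<notin> V"
    and "num_successful steps u = 0"
  shows "lossy_run Delta (insert w V) (clone_edges E u w) (L(w := L u)) (clone_steps u w L steps)
           (L'(w := L' u))"
  using assms
proof (induction Delta V E L steps L' rule: lossy_run.induct)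
  case (2 Delta V E L v m b L1 rest L')
  have step: "lossy_step Delta V E L v m b L1"
    using "2.prems" by simp
  have IH: "lossy_run Delta (insert w V) (clone_edges E u w) (L1(w := L1 u))
      (clone_steps u w L1 rest) (L'(w := L' u))"
    by (rule "2.IH") (use "2.prems" in \<open>auto split: if_splits\<close>)
  show ?case
  proof (cases "v = u")
    case True
    with "2.prems" have "\<not> b" by auto
    have "u \<noteq> w" using "2.prems" by auto
    have "lossy_step Delta (insert w V) (clone_edges E u w) (L(w := L u)) u m b (L1(w := L u))"
      and "lossy_step Delta (insert w V) (clone_edges E u w) (L1(w := L u)) w m b (L1(w := L1 u))"
      using step True \<open>\<not> b\<close> \<open>u \<noteq> w\<close> by (simp_all add: lossy_step_def)
    with IH show ?thesis
      unfolding True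
      by (simp only: clone_steps.simps simp_thms if_True append_Cons append_Nil lossy_run.simps)
  next
    case False
    have "lossy_step Delta (insert w V) (clone_edges E u w) (L(w := L u)) v m b (L1(w := L1 u))"
      using lossy_step_clone_edges[OF step] False "2.prems" by blast
    with IH show ?thesis
      by (simp only: clone_steps.simps False if_False append_Cons append_Nil lossy_run.simps)
  qed
qed simp

lemma lossy_execution_clone:
  assumes "lossy_execution I Delta V E L0 steps L" and "u \<in> V" and "w \<notin> V"
    and "num_successful steps u = 0"
  obtains E' L0' steps' where
    "lossy_execution I Delta (insert w V) E' L0' steps' (L(w := L u))"
    "\<And>x y. (x, y) \<in> E' \<longleftrightarrow> (x, y) \<in> E \<or> x = w \<and> (u, y) \<in> E \<or> y = w \<and> (u, x) \<in> E"
    "\<And>x. num_broadcasts steps' x = num_broadcasts steps (if x = w then u else x)"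
    "\<And>x. num_successful steps' x = num_successful steps (if x = w then u else x)"
proof
  have run: "lossy_run Delta V E L0 steps L" and graph: "graph V E" and "L0 ` V \<subseteq> I"
    using assms(1) by (simp_all add: lossy_execution_def)
  have "w \<notin> fst ` set steps" and "u \<noteq> w"
    using lossy_run_broadcasters_in_nodes[OF run] assms(2,3) by blast+
  then show
      "num_broadcasts (clone_steps u w L0 steps) x = num_broadcasts steps (if x = w then u else x)"
      "num_successful (clone_steps u w L0 steps) x = num_successful steps (if x = w then u else x)"
    for x
    by (simp_all add: num_broadcasts_clone_steps num_successful_clone_steps)
  show "lossy_execution I Delta (insert w V) (clone_edges E u w) (L0(w := L0 u))
      (clone_steps u w L0 steps) (L(w := L u))"
    using lossy_run_clone[OF run graph assms(2-4)] graph_clone_edges[OF graph assms(2,3)]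
      \<open>L0 ` V \<subseteq> I\<close> assms(2) by (auto simp: lossy_execution_def)
qed simp

lemma lossy_execution_successful_broadcast:
  assumes bp: "broadcast_protocol Q I M Delta" and exec: "lossy_execution I Delta V E L0 steps L"
    and "v \<in> V" and "(L v, Bcast m, q) \<in> Delta" and "(v, r) \<in> E" and "(L r, Recv m, q') \<in> Delta"
  obtains L' where "lossy_execution I Delta V E L0 (steps @ [(v, m, True, L')]) L'" and "L' r = q'"
    and "\<And>x. x \<noteq> v \<Longrightarrow> (v, x) \<notin> E \<Longrightarrow> L' x = L x"
proof -
  have "graph V E" and "L ` V \<subseteq> Q"
    using exec lossy_execution_labels_in_states[OF bp exec] by (simp_all add: lossy_execution_def)
  have "m \<in> M"
    using bp assms(4) by (fastforce simp: broadcast_protocol_def msg_of_def)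
  define R where "R x = (if x = r then q' else SOME q''. (L x, Recv m, q'') \<in> Delta)" for x
  have recv: "(L x, Recv m, R x) \<in> Delta" if "(v, x) \<in> E" for x
  proof -
    have "L x \<in> Q"
      using that \<open>graph V E\<close> \<open>L ` V \<subseteq> Q\<close> by (auto simp: graph_def)
    then obtain q'' where "(L x, Recv m, q'') \<in> Delta"
      using bp \<open>m \<in> M\<close> unfolding broadcast_protocol_def by blast
    then show ?thesis
      using assms(6) by (auto simp: R_def intro: someI)
  qed
  define L' where "L' = (\<lambda>x. if x = v then q else if (v, x) \<in> E then R x else L x)"
  have "lossy_step Delta V E L v m True L'"
    using assms(3,4) recv by (simp add: lossy_step_def L'_def)
  with exec have "lossy_execution I Delta V E L0 (steps @ [(v, m, True, L')]) L'"
    by (rule lossy_execution_snoc)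
  moreover have "r \<noteq> v"
    using \<open>graph V E\<close> assms(5) by (auto simp: graph_def irrefl_def)
  ultimately show ?thesis
    using assms(5) by (intro that[of L']) (auto simp: L'_def R_def)
qed

lemma lossy_execution_clone_pair:
  assumes exec: "lossy_execution I Delta V E L0 steps L"
    and "u1 \<in> V" and "u2 \<in> V" and "(u1, u2) \<notin> E"
    and "num_successful steps u1 = 0" and "num_successful steps u2 = 0"
    and "w \<notin> V" and "r \<notin> V" and "w \<noteq> r"
  obtains E' L0' steps' where
    "lossy_execution I Delta (insert r (insert w V)) E' L0' steps' (L(w := L u1, r := L u2))"
    "\<And>x y. (x, y) \<in> E' \<longleftrightarrow> (x, y) \<in> E \<or> x = w \<and> (u1, y) \<in> E \<or> y = w \<and> (u1, x) \<in> E
       \<or> x = r \<and> (u2, y) \<in> E \<or> y = r \<and> (u2, x) \<in> E \<or> (x, y) \<in> {(w, r), (r, w)}"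
    "\<And>x. num_broadcasts steps' x =
       num_broadcasts steps (if x = w then u1 else if x = r then u2 else x)"
    "\<And>x. num_successful steps' x =
       num_successful steps (if x = w then u1 else if x = r then u2 else x)"
proof -
  have "E \<subseteq> V \<times> V"
    using exec by (simp add: lossy_execution_def graph_def)
  obtain E1 L01 steps1
    where exec1: "lossy_execution I Delta (insert w V) E1 L01 steps1 (L(w := L u1))"
    and E1: "\<And>x y. (x, y) \<in> E1 \<longleftrightarrow> (x, y) \<in> E \<or> x = w \<and> (u1, y) \<in> E \<or> y = w \<and> (u1, x) \<in> E"
    and nb1: "\<And>x. num_broadcasts steps1 x = num_broadcasts steps (if x = w then u1 else x)"
    and ns1: "\<And>x. num_successful steps1 x = num_successful steps (if x = w then u1 else x)"
    using exec assms(2,7,5) by (rule lossy_execution_clone) (rule that)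
  have "u2 \<noteq> w" and r_fresh: "r \<notin> insert w V"
    using assms by auto
  have u2_in: "u2 \<in> insert w V" and ns1_u2: "num_successful steps1 u2 = 0"
    using assms(3,6) \<open>u2 \<noteq> w\<close> by (simp_all add: ns1)
  obtain E2 L02 steps2 where exec2: "lossy_execution I Delta (insert r (insert w V)) E2 L02 steps2
      ((L(w := L u1))(r := (L(w := L u1)) u2))"
    and E2: "\<And>x y. (x, y) \<in> E2 \<longleftrightarrow> (x, y) \<in> E1 \<or> x = r \<and> (u2, y) \<in> E1 \<or> y = r \<and> (u2, x) \<in> E1"
    and nb2: "\<And>x. num_broadcasts steps2 x = num_broadcasts steps1 (if x = r then u2 else x)"
    and ns2: "\<And>x. num_successful steps2 x = num_successful steps1 (if x = r then u2 else x)"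
    using exec1 u2_in r_fresh ns1_u2 by (rule lossy_execution_clone) (rule that)
  have "(L(w := L u1))(r := (L(w := L u1)) u2) = L(w := L u1, r := L u2)"
    using \<open>u2 \<noteq> w\<close> by simp
  moreover have "num_successful steps2 w = 0" and "num_successful steps2 r = 0"
    using assms(5,6,9) \<open>u2 \<noteq> w\<close> by (simp_all add: ns1 ns2)
  ultimately have "lossy_execution I Delta (insert r (insert w V)) (E2 \<union> {(w, r), (r, w)})
      L02 steps2 (L(w := L u1, r := L u2))"
    using lossy_execution_add_edge[OF exec2, of w r] assms(9) by simp
  moreover have "(x, y) \<in> E2 \<union> {(w, r), (r, w)} \<longleftrightarrow> (x, y) \<in> E \<or> x = w \<and> (u1, y) \<in> E
      \<or> y = w \<and> (u1, x) \<in> E \<or> x = r \<and> (u2, y) \<in> E \<or> y = r \<and> (u2, x) \<in> E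
      \<or> (x, y) \<in> {(w, r), (r, w)}" for x y
    using assms(2-4,7-9) \<open>E \<subseteq> V \<times> V\<close> unfolding Un_iff E2 E1 by blast
  ultimately show ?thesis
  proof (rule that)
    show "num_broadcasts steps2 x =
        num_broadcasts steps (if x = w then u1 else if x = r then u2 else x)"
      and "num_successful steps2 x =
        num_successful steps (if x = w then u1 else if x = r then u2 else x)"
      for x
      using \<open>u2 \<noteq> w\<close> assms(9) by (simp_all add: nb1 nb2 ns1 ns2)
  qed
qed

lemma bij_betw_fun_upd_insert:
  assumes "bij_betw f A B" and "a \<notin> A" and "b \<notin> B"
  shows "bij_betw (f(a := b)) (insert a A) (insert b B)"
proof -
  have "bij_betw (f(a := b)) A B \<longleftrightarrow> bij_betw f A B"
    by (rule bij_betw_cong) (use assms(2) in auto)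
  with assms(1) show ?thesis
    using notIn_Un_bij_betw3[of a A "f(a := b)" B] assms(2,3) by simp
qed

text \<open>N is the set of main nodes; the family of main nodes of the paper is the inverse of L on N.\<close>
definition realizable :: "'q set \<Rightarrow> ('q \<times> 'm action \<times> 'q) set \<Rightarrow> nat \<Rightarrow> nat \<Rightarrow> 'q set \<Rightarrow> bool" where
  "realizable I Delta k n A \<longleftrightarrow>
     (\<exists>(V :: nat set) E L0 L (steps :: (nat, 'm, 'q) step list) N.
        lossy_execution I Delta V E L0 steps L \<and> card V = n \<and>
        (\<forall>v \<in> V. num_broadcasts steps v \<le> k \<and> num_successful steps v \<le> 1) \<and>
        N \<subseteq> V \<and> bij_betw L N A \<and>
        (\<forall>v \<in> N. num_successful steps v = 0 \<and> (\<forall>v' \<in> N. (v, v') \<notin> E)))"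

lemma realizableI:
  fixes V :: "nat set" and steps :: "(nat, 'm, 'q) step list"
    and Delta :: "('q \<times> 'm action \<times> 'q) set"
  assumes "lossy_execution I Delta V E L0 steps L" and "card V = n"
    and "\<And>v. v \<in> V \<Longrightarrow> num_broadcasts steps v \<le> k"
    and "\<And>v. v \<in> V \<Longrightarrow> num_successful steps v \<le> 1"
    and "N \<subseteq> V" and "bij_betw L N A"
    and "\<And>v. v \<in> N \<Longrightarrow> num_successful steps v = 0"
    and "\<And>v v'. v \<in> N \<Longrightarrow> v' \<in> N \<Longrightarrow> (v, v') \<notin> E"
  shows "realizable I Delta k n A"
  unfolding realizable_def
  by (rule exI[of _ V], rule exI[of _ E], rule exI[of _ L0], rule exI[of _ L], rule exI[of _ steps],
      rule exI[of _ N]) (use assms in auto)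

lemma realizableE:
  fixes Delta :: "('q \<times> 'm action \<times> 'q) set"
  assumes "realizable I Delta k n A"
  obtains V :: "nat set" and E L0 and steps :: "(nat, 'm, 'q) step list" and L N
  where "lossy_execution I Delta V E L0 steps L" and "card V = n"
    and "\<And>v. v \<in> V \<Longrightarrow> num_broadcasts steps v \<le> k"
    and "\<And>v. v \<in> V \<Longrightarrow> num_successful steps v \<le> 1"
    and "N \<subseteq> V" and "bij_betw L N A"
    and "\<And>v. v \<in> N \<Longrightarrow> num_successful steps v = 0"
    and "\<And>v v'. v \<in> N \<Longrightarrow> v' \<in> N \<Longrightarrow> (v, v') \<notin> E"
  using assms unfolding realizable_def by blast

lemma realizable_initial:
  assumes "finite I"
  shows "realizable I Delta 0 (card I) I"
proof -
  obtain h where h: "bij_betw h {0..<card I} I"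
    using ex_bij_betw_nat_finite[OF assms] by blast
  then have "lossy_execution I Delta {0..<card I} {} h [] h"
    by (auto simp: lossy_execution_def graph_def bij_betw_def)
  then show ?thesis
    by (rule realizableI) (use h in auto)
qed

lemma realizable_lost_broadcast:
  fixes Delta :: "('q \<times> 'm action \<times> 'q) set"
  assumes "realizable I Delta k n A" and "q1 \<in> A" and "(q1, Bcast m, q2) \<in> Delta" and "q2 \<notin> A"
  shows "realizable I Delta (Suc k) (Suc n) (insert q2 A)"
proof -
  obtain V :: "nat set" and E L0 and steps :: "(nat, 'm, 'q) step list" and L N
    where exec: "lossy_execution I Delta V E L0 steps L"
    and card: "card V = n" and nb_le: "\<And>v. v \<in> V \<Longrightarrow> num_broadcasts steps v \<le> k"
    and ns_le: "\<And>v. v \<in> V \<Longrightarrow> num_successful steps v \<le> 1"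
    and "N \<subseteq> V" and bij: "bij_betw L N A"
    and ns_main: "\<And>v. v \<in> N \<Longrightarrow> num_successful steps v = 0"
    and no_edge: "\<And>v v'. v \<in> N \<Longrightarrow> v' \<in> N \<Longrightarrow> (v, v') \<notin> E"
    using realizableE[OF assms(1)] by blast
  have "finite V" and "E \<subseteq> V \<times> V"
    using exec by (simp_all add: lossy_execution_def graph_def)
  obtain u where "u \<in> N" and "L u = q1"
    using bij assms(2) by (auto simp: bij_betw_def)
  obtain w :: nat where "w \<notin> V"
    using ex_new_if_finite[OF infinite_UNIV_nat \<open>finite V\<close>] by blast
  obtain E' L0' steps'
    where exec': "lossy_execution I Delta (insert w V) E' L0' steps' (L(w := q1))"
    and E': "\<And>x y. (x, y) \<in> E' \<longleftrightarrow> (x, y) \<in> E \<or> x = w \<and> (u, y) \<in> E \<or> y = w \<and> (u, x) \<in> E"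
    and nb: "\<And>x. num_broadcasts steps' x = num_broadcasts steps (if x = w then u else x)"
    and ns: "\<And>x. num_successful steps' x = num_successful steps (if x = w then u else x)"
    using lossy_execution_clone[OF exec _ \<open>w \<notin> V\<close>] \<open>u \<in> N\<close> \<open>N \<subseteq> V\<close> ns_main \<open>L u = q1\<close> by blast
  define steps'' where "steps'' = steps' @ [(w, m, False, L(w := q2))]"
  have "lossy_step Delta (insert w V) E' (L(w := q1)) w m False (L(w := q2))"
    using assms(3) by (simp add: lossy_step_def)
  with exec' have "lossy_execution I Delta (insert w V) E' L0' steps'' (L(w := q2))"
    unfolding steps''_def by (rule lossy_execution_snoc)
  then show ?thesis
  proof (rule realizableI)
    show "card (insert w V) = Suc n"
      using card \<open>finite V\<close> \<open>w \<notin> V\<close> by simp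
    show "num_broadcasts steps'' v \<le> Suc k" and "num_successful steps'' v \<le> 1"
      if "v \<in> insert w V" for v
      using that nb_le[of u] nb_le[of v] ns_le[of u] ns_le[of v] \<open>u \<in> N\<close> \<open>N \<subseteq> V\<close>
      by (auto simp: steps''_def nb ns)
    show "insert w N \<subseteq> insert w V"
      using \<open>N \<subseteq> V\<close> by blast
    show "bij_betw (L(w := q2)) (insert w N) (insert q2 A)"
      using bij_betw_fun_upd_insert[OF bij] \<open>N \<subseteq> V\<close> \<open>w \<notin> V\<close> assms(4) by blast
    show "num_successful steps'' v = 0" if "v \<in> insert w N" for v
      using that ns_main \<open>u \<in> N\<close> by (auto simp: steps''_def ns)
    show "(x, y) \<notin> E'" if "x \<in> insert w N" and "y \<in> insert w N" for x y
    proof -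
      have "(x, y) \<notin> E" and "(u, x) \<notin> E" and "(u, y) \<notin> E"
        using that no_edge \<open>u \<in> N\<close> \<open>N \<subseteq> V\<close> \<open>w \<notin> V\<close> \<open>E \<subseteq> V \<times> V\<close> by blast+
      then show ?thesis by (simp add: E')
    qed
  qed
qed

lemma realizable_successful_broadcast:
  fixes Delta :: "('q \<times> 'm action \<times> 'q) set"
  assumes bp: "broadcast_protocol Q I M Delta" and "realizable I Delta k n A"
    and "q1 \<in> A" and "q1' \<in> A" and "(q1, Bcast m, q2) \<in> Delta" and "(q1', Recv m, q2') \<in> Delta"
    and "q2' \<notin> A"
  shows "realizable I Delta (Suc k) (Suc (Suc n)) (insert q2' A)"
proof -
  obtain V :: "nat set" and E L0 and steps :: "(nat, 'm, 'q) step list" and L N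
    where exec: "lossy_execution I Delta V E L0 steps L"
    and card: "card V = n" and nb_le: "\<And>v. v \<in> V \<Longrightarrow> num_broadcasts steps v \<le> k"
    and ns_le: "\<And>v. v \<in> V \<Longrightarrow> num_successful steps v \<le> 1"
    and "N \<subseteq> V" and bij: "bij_betw L N A"
    and ns_main: "\<And>v. v \<in> N \<Longrightarrow> num_successful steps v = 0"
    and no_edge: "\<And>v v'. v \<in> N \<Longrightarrow> v' \<in> N \<Longrightarrow> (v, v') \<notin> E"
    using realizableE[OF assms(2)] by blast
  have "finite V" and "E \<subseteq> V \<times> V"
    using exec by (simp_all add: lossy_execution_def graph_def)
  obtain u1 u2 where "u1 \<in> N" "L u1 = q1" "u2 \<in> N" "L u2 = q1'"
    using bij assms(3,4) by (auto simp: bij_betw_def)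
  obtain w :: nat where "w \<notin> V"
    using ex_new_if_finite[OF infinite_UNIV_nat \<open>finite V\<close>] by blast
  obtain r :: nat where "r \<notin> insert w V"
    using ex_new_if_finite[OF infinite_UNIV_nat] \<open>finite V\<close> by blast
  let ?V = "insert r (insert w V)"
  have pair: "u1 \<in> V" "u2 \<in> V" "(u1, u2) \<notin> E" "num_successful steps u1 = 0"
    "num_successful steps u2 = 0" "w \<notin> V" "r \<notin> V" "w \<noteq> r"
    using \<open>w \<notin> V\<close> \<open>u1 \<in> N\<close> \<open>u2 \<in> N\<close> \<open>N \<subseteq> V\<close> no_edge ns_main \<open>r \<notin> insert w V\<close> by auto
  obtain E' L0' steps'
    where exec': "lossy_execution I Delta ?V E' L0' steps' (L(w := L u1, r := L u2))"
    and E': "\<And>x y. (x, y) \<in> E' \<longleftrightarrow> (x, y) \<in> E \<or> x = w \<and> (u1, y) \<in> E \<or> y = w \<and> (u1, x) \<in> E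
       \<or> x = r \<and> (u2, y) \<in> E \<or> y = r \<and> (u2, x) \<in> E \<or> (x, y) \<in> {(w, r), (r, w)}"
    and nb: "\<And>x. num_broadcasts steps' x =
      num_broadcasts steps (if x = w then u1 else if x = r then u2 else x)"
    and ns: "\<And>x. num_successful steps' x =
      num_successful steps (if x = w then u1 else if x = r then u2 else x)"
    using exec pair by (rule lossy_execution_clone_pair) (rule that)
  have "(w, r) \<in> E'"
    by (simp add: E')
  then obtain Lf where exec'': "lossy_execution I Delta ?V E' L0' (steps' @ [(w, m, True, Lf)]) Lf"
    and "Lf r = q2'"
    and Lf_unchanged: "\<And>x. x \<noteq> w \<Longrightarrow> (w, x) \<notin> E' \<Longrightarrow> Lf x = (L(w := L u1, r := L u2)) x"
    using lossy_execution_successful_broadcast[OF bp exec', of w m q2 r q2']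
      assms(5,6) \<open>w \<noteq> r\<close> \<open>L u1 = q1\<close> \<open>L u2 = q1'\<close> by auto
  let ?steps = "steps' @ [(w, m, True, Lf)]"
  from exec'' show ?thesis
  proof (rule realizableI)
    show "card ?V = Suc (Suc n)"
      using card \<open>finite V\<close> \<open>w \<notin> V\<close> \<open>r \<notin> insert w V\<close> by simp
    show "num_broadcasts ?steps v \<le> Suc k" and "num_successful ?steps v \<le> 1" if "v \<in> ?V" for v
      using that nb_le[of u1] nb_le[of u2] nb_le[of v] ns_le[of u2] ns_le[of v] pair
      by (auto simp: nb ns)
    show "insert r N \<subseteq> ?V"
      using \<open>N \<subseteq> V\<close> by blast
    have "(w, v) \<notin> E'" and "v \<noteq> w" if "v \<in> N" for v
      using that \<open>u1 \<in> N\<close> no_edge \<open>N \<subseteq> V\<close> \<open>E \<subseteq> V \<times> V\<close> \<open>w \<notin> V\<close> \<open>r \<notin> V\<close> \<open>w \<noteq> r\<close>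
      by (auto simp: E')
    then have "bij_betw Lf (insert r N) (insert q2' A) \<longleftrightarrow>
        bij_betw (L(r := q2')) (insert r N) (insert q2' A)"
      using \<open>Lf r = q2'\<close> Lf_unchanged \<open>N \<subseteq> V\<close> \<open>r \<notin> V\<close> by (intro bij_betw_cong) auto
    then show "bij_betw Lf (insert r N) (insert q2' A)"
      using bij_betw_fun_upd_insert[OF bij] \<open>N \<subseteq> V\<close> \<open>r \<notin> V\<close> assms(7) by blast
    show "num_successful ?steps v = 0" if "v \<in> insert r N" for v
      using that ns_main \<open>u2 \<in> N\<close> \<open>N \<subseteq> V\<close> \<open>w \<notin> V\<close> \<open>w \<noteq> r\<close> by (auto simp: ns)
    show "(x, y) \<notin> E'" if "x \<in> insert r N" and "y \<in> insert r N" for x y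
      using that \<open>u2 \<in> N\<close> no_edge \<open>N \<subseteq> V\<close> \<open>E \<subseteq> V \<times> V\<close> \<open>w \<notin> V\<close> \<open>r \<notin> V\<close> \<open>w \<noteq> r\<close>
      by (auto simp: E')
  qed
qed

lemma realizable_saturation_run:
  fixes Delta :: "('q \<times> 'm action \<times> 'q) set"
  assumes bp: "broadcast_protocol Q I M Delta" and run: "saturation_run I Delta S c m" and "i \<le> m"
  shows "realizable I Delta i (c i) (S i)"
  using assms(3)
proof (induction i)
  case 0
  have "finite I"
    using bp by (auto simp: broadcast_protocol_def intro: finite_subset)
  with run show ?case
    using realizable_initial[of I Delta] by (simp add: saturation_run_def)
next
  case (Suc i)
  then have IH: "realizable I Delta i (c i) (S i)"
    and "sat_step Delta (S i) (c i) (S (Suc i)) (c (Suc i))"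
    using run by (auto simp: saturation_run_def)
  then show ?case
    unfolding sat_step_def
    using realizable_lost_broadcast[OF IH] realizable_successful_broadcast[OF bp IH] by auto
qed

theorem lemma3p7:
  fixes Q I :: "'q set" and M :: "'m set" and Delta :: "('q \<times> 'm action \<times> 'q) set"
    and S :: "nat \<Rightarrow> 'q set" and c :: "nat \<Rightarrow> nat" and m i :: nat
  assumes "broadcast_protocol Q I M Delta"
    and "saturation_run I Delta S c m"
    and "i \<le> m"
  shows "\<exists>(V :: nat set) E L0 L (steps :: (nat, 'm, 'q) step list) (vmain :: 'q \<Rightarrow> nat).
           lossy_execution I Delta V E L0 steps L \<and>
           card V = c i \<and>
           (\<forall>v \<in> V. num_broadcasts steps v \<le> i \<and> num_successful steps v \<le> 1) \<and>
           inj_on vmain (S i) \<and>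
           (\<forall>q \<in> S i. vmain q \<in> V \<and> L (vmain q) = q \<and> num_successful steps (vmain q) = 0 \<and>
              (\<forall>q' \<in> S i. (vmain q, vmain q') \<notin> E))"
proof -
  obtain V :: "nat set" and E L0 and steps :: "(nat, 'm, 'q) step list" and L N
    where exec: "lossy_execution I Delta V E L0 steps L" and card: "card V = c i"
    and nb_le: "\<And>v. v \<in> V \<Longrightarrow> num_broadcasts steps v \<le> i"
    and ns_le: "\<And>v. v \<in> V \<Longrightarrow> num_successful steps v \<le> 1"
    and "N \<subseteq> V" and bij: "bij_betw L N (S i)"
    and ns_main: "\<And>v. v \<in> N \<Longrightarrow> num_successful steps v = 0"
    and no_edge: "\<And>v v'. v \<in> N \<Longrightarrow> v' \<in> N \<Longrightarrow> (v, v') \<notin> E"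
    using realizableE[OF realizable_saturation_run[OF assms]] by blast
  define vmain where "vmain = the_inv_into N L"
  have vmain: "bij_betw vmain (S i) N"
    unfolding vmain_def using bij by (rule bij_betw_the_inv_into)
  have main_nodes: "\<forall>q \<in> S i. vmain q \<in> V \<and> L (vmain q) = q \<and> num_successful steps (vmain q) = 0 \<and>
      (\<forall>q' \<in> S i. (vmain q, vmain q') \<notin> E)"
    using bij_betwE[OF vmain] f_the_inv_into_f_bij_betw[OF bij] \<open>N \<subseteq> V\<close> ns_main no_edge
    unfolding vmain_def by blast
  show ?thesis
    by (rule exI[of _ V], rule exI[of _ E], rule exI[of _ L0], rule exI[of _ L],
        rule exI[of _ steps], rule exI[of _ vmain])
      (use exec card nb_le ns_le bij_betw_imp_inj_on[OF vmain] main_nodes in blast)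
qed

end
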